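(* Let $n$ be a nonnegative integer and let $x,y$ be complex numbers such that no denominator below vanishes. Then \[ \sum_{k=0}^{n}(-1)^k\binom{n}{k}\frac{\binom{2x+k}{k}\binom{2y+k}{k}}{\binom{2x+n+k}{k}\binom{2x-2y+k}{k}} \frac{1+2x+2k}{1+2x+n+k}H_{k}(x) =\frac{1}{2}\frac{\binom{2x+n}{n}\binom{x-2y-1+n}{n}}{\binom{x+n}{n}\binom{2x-2y+n}{n}}\big\{H_n(x)-H_{n}(x-2y-1)\big\}. \]
   Context: For complex $z$ and a nonnegative integer $k$, $\binom{z}{k}=\frac{z(z-1)\cdots(z-k+1)}{k!}$ (with $\binom{z}{0}=1$). For complex $x$ and nonnegative integer $m$, $H_0(x)=0$ and $H_m(x)=\sum_{j=1}^m\frac{1}{x+j}$ for $m\ge1$. The parameters are assumed to be such that all denominators are nonzero. *)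

theory Defs
  imports Complex_Main
begin

definition H :: "nat \<Rightarrow> complex \<Rightarrow> complex" where
  "H m x = (\<Sum>j=1..m. 1 / (x + of_nat j))"

end

theory Submission
  imports Defs
begin

text \<open>
  Suppose first that none of \<open>2x, x, x - 2y, 2x - 2y, 2y\<close> is a nonpositive integer. The summand is
  \<open>coeff n * F\<^sub>1(n,k)\<close>, with \<open>coeff n\<close> the prefactor of the right-hand side, and \<open>(F\<^sub>1, G\<^sub>1)\<close> is a
  WZ pair: \<open>F\<^sub>1(n+1,k) - F\<^sub>1(n,k) = G\<^sub>1(n,k+1) - G\<^sub>1(n,k)\<close>. Summation by parts against \<open>H\<^sub>k(x)\<close> gives
  \<open>\<Sum>\<^sub>k F\<^sub>1(n+1,k) H\<^sub>k(x) = \<Sum>\<^sub>k F\<^sub>1(n,k) H\<^sub>k(x) - \<Sum>\<^sub>k G\<^sub>1(n,k+1) / (x+k+1)\<close>.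
  Now \<open>G\<^sub>1(n,k) / (x+k)\<close> is a constant multiple of \<open>F\<^sub>2(n,k)\<close>, and \<open>\<Sum>\<^sub>k F\<^sub>2(n,k) = 1\<close> for every \<open>n\<close>
  by a second WZ pair \<open>(F\<^sub>2, G\<^sub>2)\<close>; so the correction term is explicit, and it is exactly the
  increment of \<open>(H\<^sub>n(x) - H\<^sub>n(x-2y-1))/2\<close>.
  In general, both sides are continuous in \<open>(x, y)\<close> wherever the denominators of the theorem are
  nonzero, and nearby points are generic.
\<close>

definition not_nonpos_int :: "complex \<Rightarrow> bool" where
  "not_nonpos_int a \<longleftrightarrow> (\<forall>j::nat. a + of_nat j \<noteq> 0)"

lemma pochhammer_shift_nonzero:
  assumes "not_nonpos_int a"
  shows "pochhammer (a + of_nat j) k \<noteq> 0"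
proof
  assume "pochhammer (a + of_nat j) k = 0"
  then obtain i where "a + of_nat j = - of_nat i"
    by (auto simp: pochhammer_eq_0_iff)
  then have "a + of_nat (j + i) = 0"
    by (simp add: add.assoc [symmetric])
  with assms show False
    unfolding not_nonpos_int_def by blast
qed

lemma eventually_not_nonpos_int:
  fixes c w :: complex
  assumes "w \<noteq> 0"
  shows "eventually (\<lambda>t. not_nonpos_int (c + w * t)) (at 0)"
proof -
  define N where "N = nat \<lceil>norm c + norm w\<rceil>"
  have small: "eventually (\<lambda>t. norm t < 1) (at (0::complex))"
    using eventually_at[of "\<lambda>t. norm t < 1" 0 UNIV] by (auto intro: exI[of _ 1])
  have "eventually (\<lambda>t. \<forall>j\<in>{..N}. c + w * t + of_nat j \<noteq> 0) (at 0)"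
  proof (rule eventually_ball_finite, simp, rule ballI)
    fix j
    show "eventually (\<lambda>t. c + w * t + of_nat j \<noteq> 0) (at 0)"
      using eventually_neq_at_within[of "-(c + of_nat j) / w" 0 UNIV]
      by eventually_elim (use assms in \<open>auto simp: field_simps add_eq_0_iff\<close>)
  qed
  with small show ?thesis
  proof eventually_elim
    case (elim t)
    show ?case unfolding not_nonpos_int_def
    proof
      fix j :: nat
      show "c + w * t + of_nat j \<noteq> 0"
      proof (cases "j \<le> N")
        case False
        then have "norm c + norm w < real j"
          unfolding N_def by linarith
        moreover have "norm (w * t) \<le> norm w"
          using elim(1) by (simp add: norm_mult mult_left_le)
        moreover have "real j - norm c - norm (w * t) \<le> norm (c + w * t + of_nat j)"
          using norm_diff_ineq[of "of_nat j" "c + w * t"] norm_triangle_ineq[of c "w * t"]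
          by (simp add: add.commute)
        ultimately show ?thesis by auto
      qed (use elim(2) in auto)
    qed
  qed
qed

lemma pochhammer_mult_shift: "pochhammer a k * (a + of_nat k) = a * pochhammer (a + 1) k"
  by (metis pochhammer_rec pochhammer_Suc)

lemma gbinomial_add_of_nat: "(a + of_nat k) gchoose k = pochhammer (a + 1) k / (fact k :: 'a::field_char_0)"
  by (simp add: gbinomial_pochhammer')

lemma H_Suc: "H (Suc k) z = H k z + 1 / (z + of_nat (Suc k))"
  unfolding H_def by simp

definition harmonic_sum :: "nat \<Rightarrow> complex \<Rightarrow> complex \<Rightarrow> complex" where
  "harmonic_sum n x y = (\<Sum>k=0..n. (-1)^k * of_nat (n choose k)
      * (((2*x + of_nat k) gchoose k) * ((2*y + of_nat k) gchoose k))
      / (((2*x + of_nat n + of_nat k) gchoose k) * ((2*x - 2*y + of_nat k) gchoose k))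
      * ((1 + 2*x + 2 * of_nat k) / (1 + 2*x + of_nat n + of_nat k))
      * H k x)"

definition harmonic_closed_form :: "nat \<Rightarrow> complex \<Rightarrow> complex \<Rightarrow> complex" where
  "harmonic_closed_form n x y = 1/2 * (((2*x + of_nat n) gchoose n) * ((x - 2*y - 1 + of_nat n) gchoose n))
       / (((x + of_nat n) gchoose n) * ((2*x - 2*y + of_nat n) gchoose n))
       * (H n x - H n (x - 2*y - 1))"

lemma wz_weighted_sum:
  fixes F F' G h :: "nat \<Rightarrow> 'a::comm_ring"
  assumes "\<And>k. k < m \<Longrightarrow> F' k - F k = G (Suc k) - G k" and "G 0 = 0" and "G m = 0"
  shows "(\<Sum>k<m. F' k * h k) = (\<Sum>k<m. F k * h k) - (\<Sum>k<m. G (Suc k) * (h (Suc k) - h k))"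
proof -
  have abel: "(\<Sum>k<m. (G (Suc k) - G k) * h k)
      = G m * h m - G 0 * h 0 - (\<Sum>k<m. G (Suc k) * (h (Suc k) - h k))"
    by (induction m) (simp_all add: algebra_simps)
  have "F' k * h k = F k * h k + (G (Suc k) - G k) * h k" if "k < m" for k
    using assms(1)[OF that, symmetric] by (simp add: ring_distribs)
  then have "(\<Sum>k<m. F' k * h k) = (\<Sum>k<m. F k * h k + (G (Suc k) - G k) * h k)"
    by (intro sum.cong) auto
  also have "\<dots> = (\<Sum>k<m. F k * h k) + (\<Sum>k<m. (G (Suc k) - G k) * h k)"
    by (rule sum.distrib)
  finally show ?thesis
    unfolding abel assms(2,3) by simp
qed

context
  fixes x y :: complex
begin

text \<open>\<open>pochhammer (- n - 1) k = (-1)\<^sup>k k! (n+1 choose k)\<close>, so \<open>kernel n k\<close> vanishes for \<open>k > n + 1\<close>.\<close>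

definition kernel :: "nat \<Rightarrow> nat \<Rightarrow> complex" where
  "kernel n k = pochhammer (2*x + 1) k * pochhammer (2*y + 1) k * pochhammer (- of_nat n - 1) k
     / (fact k * pochhammer (2*x - 2*y + 1) k * (of_nat n + 1) * pochhammer (2*x + of_nat n + 1) (Suc k))"

definition coeff :: "nat \<Rightarrow> complex" where
  "coeff n = pochhammer (2*x + 1) n * pochhammer (x - 2*y) n
     / (pochhammer (x + 1) n * pochhammer (2*x - 2*y + 1) n)"

definition wz_F1 :: "nat \<Rightarrow> nat \<Rightarrow> complex" where
  "wz_F1 n k = kernel n k * (of_nat n + 1 - of_nat k) * (1 + 2*x + 2*of_nat k) / coeff n"

definition wz_G1 :: "nat \<Rightarrow> nat \<Rightarrow> complex" where
  "wz_G1 n k = - of_nat k * (of_nat k + x) * (of_nat k + 2*x - 2*y) / (x - 2*y + of_nat n)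
     * kernel n k / coeff n"

definition wz_F2 :: "nat \<Rightarrow> nat \<Rightarrow> complex" where
  "wz_F2 n k = - 2 * (x + of_nat n + 1) * of_nat k * (of_nat k + 2*x - 2*y) * kernel n k
     / ((2*y + 1) * coeff n)"

text \<open>
  The certificate \<open>wz_G2 n k / wz_F2 n k\<close> has a factor \<open>1/(n + 2 - k)\<close>, so \<open>wz_G2\<close> is written with
  \<open>kernel (Suc n) k\<close>, which unlike \<open>kernel n k\<close> does not vanish at \<open>k = n + 2\<close>.
\<close>

definition wz_G2 :: "nat \<Rightarrow> nat \<Rightarrow> complex" where
  "wz_G2 n k = (of_nat k - 1) * (of_nat k - 1 + 2*x - 2*y) * of_nat k * (of_nat k + 2*x - 2*y)
     * (x + of_nat n + 1) * (2*x + of_nat n + of_nat k + 2) * kernel (Suc n) k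
     / ((x - 2*y + of_nat n) * (of_nat n + 1) * (2*x + of_nat n + 1) * (2*y + 1) * coeff n)"

lemma kernel_eq_0: "Suc n < k \<Longrightarrow> kernel n k = 0"
  unfolding kernel_def by (auto simp: pochhammer_eq_0_iff intro!: exI[of _ "Suc n"])

lemma kernel_Suc_right:
  "kernel n (Suc k) = kernel n k * ((2*x + 1 + of_nat k) * (2*y + 1 + of_nat k) * (of_nat k - of_nat n - 1))
     / ((of_nat k + 1) * (2*x - 2*y + 1 + of_nat k) * (2*x + of_nat n + of_nat k + 2))"
  unfolding kernel_def pochhammer_Suc[of _ "Suc k"] pochhammer_Suc[of _ k] fact_Suc
  by (simp add: field_simps)

lemma coeff_Suc:
  "coeff (Suc n) = coeff n * ((2*x + 1 + of_nat n) * (x - 2*y + of_nat n))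
     / ((x + 1 + of_nat n) * (2*x - 2*y + 1 + of_nat n))"
  unfolding coeff_def pochhammer_Suc by (simp add: field_simps)

lemma coeff_eq_gchoose:
  "((2*x + of_nat n) gchoose n) * ((x - 2*y - 1 + of_nat n) gchoose n)
     / (((x + of_nat n) gchoose n) * ((2*x - 2*y + of_nat n) gchoose n)) = coeff n"
proof -
  have "x - 2*y - 1 + 1 = x - 2*y" by simp
  then show ?thesis
    unfolding gbinomial_add_of_nat coeff_def by (simp add: divide_simps)
qed

lemma wz_F1_eq_0: "n < k \<Longrightarrow> wz_F1 n k = 0"
  by (cases "k = Suc n") (auto simp: wz_F1_def kernel_eq_0)

lemma wz_F2_eq_0: "Suc n < k \<Longrightarrow> wz_F2 n k = 0"
  by (simp add: wz_F2_def kernel_eq_0)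

lemma wz_G1_eq_0: "k = 0 \<or> Suc n < k \<Longrightarrow> wz_G1 n k = 0"
  by (auto simp: wz_G1_def kernel_eq_0)

lemma wz_G2_eq_0: "k = 0 \<or> n + 2 < k \<Longrightarrow> wz_G2 n k = 0"
  by (auto simp: wz_G2_def kernel_eq_0)

context
  assumes gen_2x: "not_nonpos_int (2*x)" and gen_x: "not_nonpos_int x"
    and gen_x_2y: "not_nonpos_int (x - 2*y)" and gen_2x_2y: "not_nonpos_int (2*x - 2*y)"
    and gen_2y: "not_nonpos_int (2*y)"
begin

lemma shift_nonzero:
  "2*x + of_nat j \<noteq> 0" "x + of_nat j \<noteq> 0" "x - 2*y + of_nat j \<noteq> 0"
  "2*x - 2*y + of_nat j \<noteq> 0" "2*y + of_nat j \<noteq> 0"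
  using gen_2x gen_x gen_x_2y gen_2x_2y gen_2y unfolding not_nonpos_int_def by blast+

lemma coeff_nonzero: "coeff n \<noteq> 0"
  using pochhammer_shift_nonzero[OF gen_2x, of 1] pochhammer_shift_nonzero[OF gen_x_2y, of 0]
    pochhammer_shift_nonzero[OF gen_x, of 1] pochhammer_shift_nonzero[OF gen_2x_2y, of 1]
  by (simp add: coeff_def)

lemma kernel_Suc_left:
  "kernel (Suc n) k * (of_nat (Suc n) + 1 - of_nat k)
     = kernel n k * (of_nat n + 1) * (2*x + of_nat n + 1) / (2*x + of_nat n + of_nat k + 2)"
proof -
  define A where "A = pochhammer (2*x + 1) k * pochhammer (2*y + 1) k / (fact k * pochhammer (2*x - 2*y + 1) k)"
  define P where "P m = pochhammer (- of_nat m - 1 :: complex) k" for m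
  define Q where "Q m = pochhammer (2*x + of_nat m + 1) (Suc k)" for m
  have kernel_eq: "kernel m k = A * P m / ((of_nat m + 1) * Q m)" for m
    unfolding kernel_def A_def P_def Q_def by (simp add: divide_inverse ac_simps)
  have arg: "- of_nat (Suc n) - 1 + 1 = (- of_nat n - 1 :: complex)"
    by simp
  have "P (Suc n) * (- of_nat (Suc n) - 1 + of_nat k) = (- of_nat (Suc n) - 1) * P n"
    using pochhammer_mult_shift[of "- of_nat (Suc n) - 1 :: complex" k] unfolding arg P_def .
  then have minus: "P (Suc n) * (of_nat (Suc n) + 1 - of_nat k) = (of_nat (Suc n) + 1) * P n"
    by algebra
  have shift: "Q n * (2*x + of_nat n + of_nat k + 2) = (2*x + of_nat n + 1) * Q (Suc n)"
    using pochhammer_mult_shift[of "2*x + of_nat n + 1" "Suc k"] unfolding Q_def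
    by (simp add: algebra_simps)
  have "2*x + of_nat n + 1 \<noteq> 0" "2*x + of_nat n + of_nat k + 2 \<noteq> 0"
    using shift_nonzero(1)[of "n + 1"] shift_nonzero(1)[of "n + k + 2"] by (simp_all add: algebra_simps)
  moreover have "(of_nat (Suc n) + 1 :: complex) \<noteq> 0" "(of_nat n + 1 :: complex) \<noteq> 0"
    using of_nat_neq_0[of n, where 'a=complex] of_nat_neq_0[of "Suc n", where 'a=complex]
    by (simp_all add: algebra_simps)
  moreover have "Q n \<noteq> 0" "Q (Suc n) \<noteq> 0"
    using pochhammer_shift_nonzero[OF gen_2x, of "n + 1"] pochhammer_shift_nonzero[OF gen_2x, of "n + 2"]
    unfolding Q_def by (simp_all add: algebra_simps)
  ultimately have "A * ((of_nat (Suc n) + 1) * P n) / ((of_nat (Suc n) + 1) * Q (Suc n))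
      = A * P n / ((of_nat n + 1) * Q n) * (of_nat n + 1) * (2*x + of_nat n + 1)
        / (2*x + of_nat n + of_nat k + 2)"
    using shift by (simp add: divide_simps)
  then show ?thesis
    unfolding kernel_eq minus [symmetric] by (simp add: ac_simps)
qed

lemma wz_pair_1: "wz_F1 (Suc n) k - wz_F1 n k = wz_G1 n (Suc k) - wz_G1 n k"
proof -
  define N where "N = (of_nat n :: complex)"
  define K where "K = (of_nat k :: complex)"
  define E where "E = kernel n k / (coeff n * (2*x + N + K + 2) * (x - 2*y + N) * (2*x - 2*y + 1 + K))"
  have nz: "2*x + N + K + 2 \<noteq> 0" "2*x + 1 + N \<noteq> 0" "x + 1 + N \<noteq> 0" "2*x - 2*y + 1 + N \<noteq> 0"
    "x - 2*y + N \<noteq> 0" "2*x - 2*y + 1 + K \<noteq> 0" "K + 1 \<noteq> 0"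
    using shift_nonzero(1)[of "n + k + 2"] shift_nonzero(1)[of "n + 1"] shift_nonzero(2)[of "n + 1"]
      shift_nonzero(4)[of "n + 1"] shift_nonzero(3)[of n] shift_nonzero(4)[of "k + 1"]
      of_nat_neq_0[of k, where 'a=complex]
    unfolding N_def K_def by (simp_all add: algebra_simps)
  note nz = nz[unfolded N_def K_def] coeff_nonzero[of n]
  have F1_Suc: "wz_F1 (Suc n) k
      = E * ((N + 1) * (1 + 2*x + 2*K) * (x + 1 + N) * (2*x - 2*y + 1 + N) * (2*x - 2*y + 1 + K))"
    unfolding wz_F1_def kernel_Suc_left coeff_Suc E_def N_def K_def
    using nz by (simp add: divide_simps)
  have F1: "wz_F1 n k = E * ((N + 1 - K) * (1 + 2*x + 2*K) * (2*x + N + K + 2) * (x - 2*y + N)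
      * (2*x - 2*y + 1 + K))"
    unfolding wz_F1_def E_def N_def K_def
    using nz by (simp add: divide_simps)
  have G1_Suc: "wz_G1 n (Suc k)
      = E * ((K + 1 + x) * (K + 1 + 2*x - 2*y) * (2*x + 1 + K) * (2*y + 1 + K) * (N + 1 - K))"
    unfolding wz_G1_def kernel_Suc_right E_def N_def K_def
    using nz by (simp add: divide_simps) (simp add: algebra_simps)
  have G1: "wz_G1 n k = E * (- K * (K + x) * (K + 2*x - 2*y) * (2*x + N + K + 2) * (2*x - 2*y + 1 + K))"
    unfolding wz_G1_def E_def N_def K_def
    using nz by (simp add: divide_simps)
  have "(N + 1) * (1 + 2*x + 2*K) * (x + 1 + N) * (2*x - 2*y + 1 + N) * (2*x - 2*y + 1 + K)
      - (N + 1 - K) * (1 + 2*x + 2*K) * (2*x + N + K + 2) * (x - 2*y + N) * (2*x - 2*y + 1 + K)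
    = (K + 1 + x) * (K + 1 + 2*x - 2*y) * (2*x + 1 + K) * (2*y + 1 + K) * (N + 1 - K)
      - (- K * (K + x) * (K + 2*x - 2*y) * (2*x + N + K + 2) * (2*x - 2*y + 1 + K))"
    by algebra
  from arg_cong[OF this, of "(*) E"] show ?thesis
    unfolding F1_Suc F1 G1_Suc G1 right_diff_distrib .
qed

lemma wz_pair_2: "wz_F2 (Suc n) k - wz_F2 n k = wz_G2 n (Suc k) - wz_G2 n k"
proof -
  define E where "E = kernel (Suc n) k / coeff n * (of_nat k * (of_nat k + 2*x - 2*y))
    / ((2*y + 1) * (2*x + 1 + of_nat n) * (x - 2*y + of_nat n) * (of_nat n + 1))"
  define N where "N = (of_nat n :: complex)"
  define K where "K = (of_nat k :: complex)"
  have nz: "2*x + N + K + 2 \<noteq> 0" "2*x + N + K + 3 \<noteq> 0" "2*x + 1 + N \<noteq> 0" "x + 1 + N \<noteq> 0"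
    "x + N + 2 \<noteq> 0" "2*x - 2*y + 1 + N \<noteq> 0" "x - 2*y + N \<noteq> 0" "2*x - 2*y + 1 + K \<noteq> 0"
    "2*y + 1 \<noteq> 0" "K + 1 \<noteq> 0" "N + 1 \<noteq> 0"
    using shift_nonzero(1)[of "n + k + 2"] shift_nonzero(1)[of "n + k + 3"] shift_nonzero(1)[of "n + 1"]
      shift_nonzero(2)[of "n + 1"] shift_nonzero(2)[of "n + 2"] shift_nonzero(4)[of "n + 1"]
      shift_nonzero(3)[of n] shift_nonzero(4)[of "k + 1"] shift_nonzero(5)[of 1]
      of_nat_neq_0[of k, where 'a=complex] of_nat_neq_0[of n, where 'a=complex]
    unfolding N_def K_def by (simp_all add: algebra_simps)
  note nz = nz[unfolded N_def K_def] coeff_nonzero[of n]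
  have kernel_n: "kernel n k = kernel (Suc n) k * (N + 2 - K) * (2*x + N + K + 2) / ((N + 1) * (2*x + N + 1))"
    using kernel_Suc_left[of n k] nz unfolding N_def K_def by (simp add: divide_simps ac_simps)
  have F2_Suc: "wz_F2 (Suc n) k = E * (-2 * (x + N + 2) * (x + 1 + N) * (2*x - 2*y + 1 + N) * (N + 1))"
    unfolding wz_F2_def coeff_Suc E_def N_def K_def
    using nz by (simp add: divide_simps ac_simps)
  have F2: "wz_F2 n k = E * (-2 * (N + 2 - K) * (2*x + N + K + 2) * (x + N + 1) * (x - 2*y + N))"
    unfolding wz_F2_def kernel_n E_def N_def K_def
    using nz by (simp add: divide_simps ac_simps) (simp add: algebra_simps)
  have G2_Suc: "wz_G2 n (Suc k) = E * (-(x + N + 1) * (2*x + 1 + K) * (2*y + 1 + K) * (N + 2 - K))"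
    unfolding wz_G2_def kernel_Suc_right E_def N_def K_def
    using nz by (simp add: divide_simps ac_simps) (simp add: algebra_simps)
  have G2: "wz_G2 n k = E * ((K - 1) * (K - 1 + 2*x - 2*y) * (2*x + N + K + 2) * (x + N + 1))"
    unfolding wz_G2_def E_def N_def K_def
    using nz by (simp add: divide_simps ac_simps)
  have "-2 * (x + N + 2) * (x + 1 + N) * (2*x - 2*y + 1 + N) * (N + 1)
      - (-2 * (N + 2 - K) * (2*x + N + K + 2) * (x + N + 1) * (x - 2*y + N))
    = -(x + N + 1) * (2*x + 1 + K) * (2*y + 1 + K) * (N + 2 - K)
      - (K - 1) * (K - 1 + 2*x - 2*y) * (2*x + N + K + 2) * (x + N + 1)"
    by algebra
  from arg_cong[OF this, of "(*) E"] show ?thesis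
    unfolding F2_Suc F2 G2_Suc G2 right_diff_distrib .
qed

lemma sum_wz_F2: "(\<Sum>k<n+2. wz_F2 n k) = 1"
proof (induction n)
  case 0
  have "2*x + 1 \<noteq> 0" "2*x + 2 \<noteq> 0" "2*x - 2*y + 1 \<noteq> 0" "2*y + 1 \<noteq> 0"
    using shift_nonzero(1)[of 1] shift_nonzero(1)[of 2] shift_nonzero(4)[of 1] shift_nonzero(5)[of 1]
    by simp_all
  then have "wz_F2 0 1 = 1"
    unfolding wz_F2_def kernel_def coeff_def
    by (simp add: numeral_2_eq_2 pochhammer_Suc divide_simps) (simp add: algebra_simps)
  then show ?case
    by (simp add: numeral_2_eq_2 wz_F2_def)
next
  case (Suc n)
  have "n + 3 = Suc (n + 2)" by simp
  then have "(\<Sum>k<n+3. wz_F2 n k) = (\<Sum>k<n+2. wz_F2 n k)"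
    by (simp only: sum.lessThan_Suc) (simp add: wz_F2_eq_0)
  moreover have "(\<Sum>k<n+3. wz_F2 (Suc n) k) = (\<Sum>k<n+3. wz_F2 n k)"
    using wz_weighted_sum[of "n+3" "wz_F2 (Suc n)" "wz_F2 n" "wz_G2 n" "\<lambda>_. 1"]
    by (simp add: wz_pair_2 wz_G2_eq_0)
  ultimately have "(\<Sum>k<n+3. wz_F2 (Suc n) k) = 1"
    using Suc.IH by (simp only:)
  moreover have "Suc n + 2 = n + 3" by simp
  ultimately show ?case by (simp only:)
qed

lemma wz_G1_div_eq_wz_F2:
  "wz_G1 n (Suc k) / (x + of_nat (Suc k))
     = (2*y + 1) / (2 * (x + of_nat n + 1) * (x - 2*y + of_nat n)) * wz_F2 n (Suc k)"
proof -
  have "x + of_nat (Suc k) \<noteq> 0" "2*x + 2*of_nat n + 2 \<noteq> 0" "x - 2*y + of_nat n \<noteq> 0"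
    "2*y + 1 \<noteq> 0"
    using shift_nonzero(2)[of "Suc k"] shift_nonzero(1)[of "2*n + 2"] shift_nonzero(3)[of n]
      shift_nonzero(5)[of 1] by (simp_all add: algebra_simps)
  then show ?thesis
    using coeff_nonzero[of n] unfolding wz_G1_def wz_F2_def
    by (simp add: divide_simps) (simp add: algebra_simps)
qed

lemma sum_wz_G1_harmonic_increment:
  "(\<Sum>k<n+2. wz_G1 n (Suc k) * (H (Suc k) x - H k x))
     = (2*y + 1) / (2 * (x + of_nat n + 1) * (x - 2*y + of_nat n))"
proof -
  define c where "c = (2*y + 1) / (2 * (x + of_nat n + 1) * (x - 2*y + of_nat n))"
  have "(\<Sum>k<Suc (Suc (Suc n)). wz_F2 n k) = wz_F2 n 0 + (\<Sum>k<Suc (Suc n). wz_F2 n (Suc k))"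
    by (rule sum.lessThan_Suc_shift)
  moreover have "(\<Sum>k<Suc (Suc (Suc n)). wz_F2 n k) = 1"
    using sum_wz_F2[of n] by (simp add: wz_F2_eq_0)
  ultimately have "(\<Sum>k<Suc (Suc n). wz_F2 n (Suc k)) = 1"
    by (simp add: wz_F2_def)
  moreover have "wz_G1 n (Suc k) * (H (Suc k) x - H k x) = c * wz_F2 n (Suc k)" for k
    unfolding H_Suc c_def wz_G1_div_eq_wz_F2 [symmetric] by simp
  ultimately have "(\<Sum>k<n+2. wz_G1 n (Suc k) * (H (Suc k) x - H k x)) = c"
    by (simp flip: sum_distrib_left)
  then show ?thesis
    unfolding c_def .
qed

lemma sum_wz_F1_harmonic: "(\<Sum>k\<le>n. wz_F1 n k * H k x) = (H n x - H n (x - 2*y - 1)) / 2"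
proof (induction n)
  case 0
  show ?case by (simp add: H_def)
next
  case (Suc n)
  have "(\<Sum>k\<le>Suc n. wz_F1 (Suc n) k * H k x)
      = (\<Sum>k<Suc (Suc n). wz_F1 n k * H k x)
        - (\<Sum>k<Suc (Suc n). wz_G1 n (Suc k) * (H (Suc k) x - H k x))"
    unfolding lessThan_Suc_atMost [symmetric]
    by (rule wz_weighted_sum) (simp_all add: wz_pair_1 wz_G1_eq_0)
  also have "\<dots> = (H n x - H n (x - 2*y - 1)) / 2
      - (2*y + 1) / (2 * (x + of_nat n + 1) * (x - 2*y + of_nat n))"
    using Suc.IH unfolding lessThan_Suc_atMost [symmetric]
    by (simp only: sum_wz_G1_harmonic_increment [unfolded add_2_eq_Suc']) (simp add: wz_F1_eq_0)
  also have "\<dots> = (H (Suc n) x - H (Suc n) (x - 2*y - 1)) / 2"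
  proof -
    have "x + of_nat n + 1 \<noteq> 0" "2*x + 2*of_nat n + 2 \<noteq> 0" "x - 2*y + of_nat n \<noteq> 0"
      using shift_nonzero(2)[of "n + 1"] shift_nonzero(1)[of "2*n + 2"] shift_nonzero(3)[of n]
      by (simp_all add: algebra_simps)
    then show ?thesis
      unfolding H_Suc by (simp add: divide_simps) (simp add: algebra_simps)
  qed
  finally show ?case .
qed

lemma summand_eq_coeff_wz_F1:
  "(-1)^k * of_nat (n choose k)
      * (((2*x + of_nat k) gchoose k) * ((2*y + of_nat k) gchoose k))
      / (((2*x + of_nat n + of_nat k) gchoose k) * ((2*x - 2*y + of_nat k) gchoose k))
      * ((1 + 2*x + 2 * of_nat k) / (1 + 2*x + of_nat n + of_nat k))
    = coeff n * wz_F1 n k"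
proof -
  define a where "a = pochhammer (2*x + 1) k * pochhammer (2*y + 1) k"
  define c where "c = pochhammer (2*x - 2*y + 1) k"
  define q where "q = pochhammer (2*x + of_nat n + 1) k"
  define R where "R = pochhammer (- of_nat n :: complex) k"
  define s where "s = 1 + 2*x + 2 * of_nat k"
  define t where "t = 1 + 2*x + of_nat n + of_nat k"
  have arg: "- of_nat n - 1 + 1 = (- of_nat n :: complex)"
    by simp
  have "pochhammer (- of_nat n - 1) k * (- of_nat n - 1 + of_nat k) = (- of_nat n - 1) * R"
    using pochhammer_mult_shift[of "- of_nat n - 1 :: complex" k] unfolding arg R_def .
  then have minus: "pochhammer (- of_nat n - 1) k * (of_nat n + 1 - of_nat k) = (of_nat n + 1) * R"
    by algebra
  have nz: "fact k \<noteq> (0 :: complex)" "q \<noteq> 0" "c \<noteq> 0" "t \<noteq> 0" "(of_nat n + 1 :: complex) \<noteq> 0"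
    using pochhammer_shift_nonzero[OF gen_2x, of "n + 1" k] pochhammer_shift_nonzero[OF gen_2x_2y, of 1 k]
      shift_nonzero(1)[of "n + k + 1"] of_nat_neq_0[of n, where 'a=complex]
    unfolding q_def c_def t_def by (simp_all add: algebra_simps)
  have choose: "of_nat (n choose k) = (-1)^k * R / fact k"
    unfolding R_def by (simp add: binomial_gbinomial gbinomial_pochhammer)
  have "(-1)^k * (-1)^k = (1 :: complex)"
    by (simp flip: power_add)
  then have "(-1)^k * of_nat (n choose k)
      * (((2*x + of_nat k) gchoose k) * ((2*y + of_nat k) gchoose k))
      / (((2*x + of_nat n + of_nat k) gchoose k) * ((2*x - 2*y + of_nat k) gchoose k))
      * ((1 + 2*x + 2 * of_nat k) / (1 + 2*x + of_nat n + of_nat k))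
    = a * R * s / (fact k * c * q * t)"
    using nz unfolding choose gbinomial_add_of_nat a_def c_def q_def s_def t_def
    by (simp add: field_simps)
  also have "\<dots> = a * (pochhammer (- of_nat n - 1) k * (of_nat n + 1 - of_nat k)) * s
      / (fact k * c * (of_nat n + 1) * (q * t))"
    using nz unfolding minus by (simp add: divide_simps ac_simps)
  also have "\<dots> = kernel n k * (of_nat n + 1 - of_nat k) * s"
    unfolding kernel_def pochhammer_Suc a_def c_def q_def t_def by (simp add: algebra_simps)
  also have "\<dots> = coeff n * wz_F1 n k"
    using coeff_nonzero[of n] unfolding wz_F1_def s_def by simp
  finally show ?thesis .
qed

lemma harmonic_sum_eq_closed_form_generic: "harmonic_sum n x y = harmonic_closed_form n x y"
proof -
  have "harmonic_sum n x y = coeff n * (\<Sum>k\<le>n. wz_F1 n k * H k x)"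
    unfolding harmonic_sum_def summand_eq_coeff_wz_F1 atLeast0AtMost sum_distrib_left
    by (simp only: mult.assoc)
  then show ?thesis
    unfolding harmonic_closed_form_def sum_wz_F1_harmonic coeff_eq_gchoose [symmetric] by simp
qed

end

end


lemma isCont_gchoose [continuous_intros]:
  fixes f :: "'a::t2_space \<Rightarrow> 'b::real_normed_field"
  shows "isCont f a \<Longrightarrow> isCont (\<lambda>t. f t gchoose k) a"
  unfolding gbinomial_prod_rev by (intro continuous_intros) auto

lemma isCont_H [continuous_intros]:
  assumes "isCont f a" and "\<And>j. 1 \<le> j \<Longrightarrow> j \<le> m \<Longrightarrow> f a + of_nat j \<noteq> 0"
  shows "isCont (\<lambda>t. H m (f t)) a"
  unfolding H_def using assms by (intro continuous_intros) auto

lemma isCont_eventually_eq_imp_eq: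
  fixes f g :: "'a::{perfect_space, t2_space} \<Rightarrow> 'b::t2_space"
  assumes "isCont f a" and "isCont g a" and "eventually (\<lambda>t. f t = g t) (at a)"
  shows "f a = g a"
  using assms by (metis LIM_unique isCont_def tendsto_cong)

theorem theorem5:
  fixes n :: nat and x y :: complex
  assumes d1: "\<And>k. k \<le> n \<Longrightarrow> (2*x + of_nat n + of_nat k) gchoose k \<noteq> 0"
      and d2: "\<And>k. k \<le> n \<Longrightarrow> (2*x - 2*y + of_nat k) gchoose k \<noteq> 0"
      and d3: "\<And>k. k \<le> n \<Longrightarrow> 1 + 2*x + of_nat n + of_nat k \<noteq> 0"
      and d4: "\<And>j. 1 \<le> j \<Longrightarrow> j \<le> n \<Longrightarrow> x + of_nat j \<noteq> 0"
      and d5: "\<And>j. 1 \<le> j \<Longrightarrow> j \<le> n \<Longrightarrow> x - 2*y - 1 + of_nat j \<noteq> 0"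
      and d6: "(x + of_nat n) gchoose n \<noteq> 0"
  shows "(\<Sum>k=0..n. (-1)^k * of_nat (n choose k)
            * (((2*x + of_nat k) gchoose k) * ((2*y + of_nat k) gchoose k))
            / (((2*x + of_nat n + of_nat k) gchoose k) * ((2*x - 2*y + of_nat k) gchoose k))
            * ((1 + 2*x + 2 * of_nat k) / (1 + 2*x + of_nat n + of_nat k))
            * H k x)
       = 1/2 * (((2*x + of_nat n) gchoose n) * ((x - 2*y - 1 + of_nat n) gchoose n))
             / (((x + of_nat n) gchoose n) * ((2*x - 2*y + of_nat n) gchoose n))
             * (H n x - H n (x - 2*y - 1))"
proof -
  \<comment> \<open>Along \<open>(x + t, y + 3t)\<close> each of \<open>2x, x, x - 2y, 2x - 2y, 2y\<close> moves with nonzero speed.\<close>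
  have "eventually (\<lambda>t. not_nonpos_int (2*x + 2*t) \<and> not_nonpos_int (x + 1*t)
      \<and> not_nonpos_int (x - 2*y + (-5)*t) \<and> not_nonpos_int (2*x - 2*y + (-4)*t)
      \<and> not_nonpos_int (2*y + 6*t)) (at 0)"
    by (intro eventually_conj eventually_not_nonpos_int) simp_all
  then have ev: "eventually (\<lambda>t. harmonic_sum n (x + t) (y + 3*t)
      = harmonic_closed_form n (x + t) (y + 3*t)) (at 0)"
    by eventually_elim (rule harmonic_sum_eq_closed_form_generic; simp add: algebra_simps)
  have cont_lhs: "isCont (\<lambda>t. harmonic_sum n (x + t) (y + 3*t)) 0"
    unfolding harmonic_sum_def by (intro continuous_intros) (auto simp: d1 d2 d3 d4)
  have cont_rhs: "isCont (\<lambda>t. harmonic_closed_form n (x + t) (y + 3*t)) 0"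
    unfolding harmonic_closed_form_def by (intro continuous_intros) (auto simp: d2 d4 d5 d6)
  have "harmonic_sum n x y = harmonic_closed_form n x y"
    using isCont_eventually_eq_imp_eq[OF cont_lhs cont_rhs ev] by simp
  then show ?thesis
    unfolding harmonic_sum_def harmonic_closed_form_def .
qed

end
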